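(* Fix $\alpha>0$. As $\Gamma\to\infty$, each of the following three upper bounds on $F_\alpha(\Gamma)$ has the form $\alpha\log(\Gamma)+c_{\alpha}+o(1)$: (i) the channel coding converse bound $\min\{2E_0(\alpha,\Gamma),\gamma_\alpha\Gamma\}$, with $c_\alpha=\alpha-(1+\alpha)\log(1+\alpha)$; (ii) the spherical cap bound (equal to $\gamma_\alpha\Gamma$ for $\Gamma<\alpha/\gamma_\alpha$ and to $\alpha[\log(\gamma_\alpha\Gamma/\alpha)+1]$ for $\Gamma\ge\alpha/\gamma_\alpha$), with $c_\alpha=\alpha\log(\gamma_\alpha/\alpha)+\alpha$; (iii) for $\alpha\ge2$, the spectrum replication bound $\gamma_{\alpha}\Gamma-[\alpha\Lambda_{\alpha}(\Gamma)]_{+}$, with $c_\alpha=\alpha\log(e/8)$. Moreover, for $\alpha<2$, when $\gamma_\alpha$ in the spectrum replication bound is replaced by the upper bound $\bar\gamma_\alpha$ below, the resulting bound increases linearly with $\Gamma$ as $\Gamma\to\infty$.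
   Context: $\Gamma>0$ is the SNR, $F_\alpha(\Gamma)$ is the optimal MP$\alpha$E exponent per unit bandwidth for conveying a parameter $u\in[0,1)$ over a band-limited AWGN channel (largest achievable exponent of $\sup_u\mathbb{E}_u|\hat u-u|^\alpha$ divided by the bandwidth $W$, with $\Gamma=P/(N_0W)$), and $\gamma_\alpha=\lim_{\Gamma\to0}F_\alpha(\Gamma)/\Gamma$ is the unlimited-bandwidth MP$\alpha$E exponent; for $\alpha\ge2$ one has $\gamma_\alpha=\frac{\alpha}{2(1+\alpha)}$. Definitions: $E_{0}(\rho,\Gamma)=\frac{1}{2}\left[(1-\beta_{0})(1+\rho)+\Gamma+\log\left(\beta_{0}-\frac{\Gamma}{1+\rho}\right)+\rho\log(\beta_{0})\right]$ with $\beta_{0}=\frac{1}{2}\left(1+\frac{\Gamma}{1+\rho}\right)\left[1+\sqrt{1-\frac{4\Gamma\rho}{(1+\rho+\Gamma)^{2}}}\right]$; $[t]_+=\max\{t,0\}$, $\Lambda_{\alpha}(\Gamma)=\sup_{0<\rho\leq1}\frac{\Phi(\rho,\Gamma)-\gamma_{\alpha}\Gamma}{\rho}$, $\Phi(\rho,\Gamma)=\rho[\eta-1-\log\eta]+\eta+\Gamma+\log\left[\frac{\sqrt{4\eta\Gamma+1}+1}{2\eta}\right]-\sqrt{4\eta\Gamma+1}$ with $\eta=\frac{\Gamma+\sqrt{\Gamma^{2}-4(\rho^{2}+1)(\rho+1)^{2}}}{2(\rho+1)^{2}}$. The upper bound $\bar\gamma_\alpha\ge\gamma_\alpha$ is: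 $\bar\gamma_\alpha=\frac{1}{1+\alpha}\min\{\alpha,\psi(\alpha)\}$ for $0<\alpha\le\alpha_0$; $\bar\gamma_\alpha=\frac{\alpha}{2(1+\alpha)}\left[1+\frac{\alpha+5-4\sqrt{\alpha+1}}{3\alpha+1}\right]$ for $\alpha_0\le\alpha\le2$; $\bar\gamma_\alpha=\frac{\alpha}{2(1+\alpha)}$ for $\alpha\ge2$, where $\alpha_0\approx1.5875$ is the unique root of $\alpha^2-(\alpha-1)\sqrt{\alpha+1}-2=0$ and $\psi(\alpha)=1+\alpha-\max_{q\ge1/2}[2\alpha q+4q\sqrt{(1-q)q(1+\alpha)}-q^2(3\alpha+1)]$. Logarithms are natural. *)

theory Defs
  imports "HOL-Analysis.Analysis"
begin

definition beta0 :: "real \<Rightarrow> real \<Rightarrow> real" where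
  "beta0 \<rho> \<Gamma> = (1/2) * (1 + \<Gamma> / (1 + \<rho>)) *
      (1 + sqrt (1 - 4 * \<Gamma> * \<rho> / (1 + \<rho> + \<Gamma>)^2))"

definition E0 :: "real \<Rightarrow> real \<Rightarrow> real" where
  "E0 \<rho> \<Gamma> = (1/2) * ((1 - beta0 \<rho> \<Gamma>) * (1 + \<rho>) + \<Gamma>
      + ln (beta0 \<rho> \<Gamma> - \<Gamma> / (1 + \<rho>)) + \<rho> * ln (beta0 \<rho> \<Gamma>))"

definition pos_part :: "real \<Rightarrow> real" where
  "pos_part t = max t 0"

definition eta_fn :: "real \<Rightarrow> real \<Rightarrow> real" where
  "eta_fn \<rho> \<Gamma> = (\<Gamma> + sqrt (\<Gamma>^2 - 4 * (\<rho>^2 + 1) * (\<rho> + 1)^2)) / (2 * (\<rho> + 1)^2)"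

definition Phi :: "real \<Rightarrow> real \<Rightarrow> real" where
  "Phi \<rho> \<Gamma> = (let \<eta> = eta_fn \<rho> \<Gamma> in
      \<rho> * (\<eta> - 1 - ln \<eta>) + \<eta> + \<Gamma>
      + ln ((sqrt (4 * \<eta> * \<Gamma> + 1) + 1) / (2 * \<eta>)) - sqrt (4 * \<eta> * \<Gamma> + 1))"

text \<open>Lambda, parametrised by the value g used in place of gamma_alpha.\<close>
definition Lambda :: "real \<Rightarrow> real \<Rightarrow> real" where
  "Lambda g \<Gamma> = (SUP \<rho>\<in>{0<..1}. (Phi \<rho> \<Gamma> - g * \<Gamma>) / \<rho>)"

definition converse_bound :: "real \<Rightarrow> real \<Rightarrow> real \<Rightarrow> real" where
  "converse_bound \<alpha> g \<Gamma> = min (2 * E0 \<alpha> \<Gamma>) (g * \<Gamma>)"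

definition cap_bound :: "real \<Rightarrow> real \<Rightarrow> real \<Rightarrow> real" where
  "cap_bound \<alpha> g \<Gamma> =
     (if \<Gamma> < \<alpha> / g then g * \<Gamma> else \<alpha> * (ln (g * \<Gamma> / \<alpha>) + 1))"

definition replication_bound :: "real \<Rightarrow> real \<Rightarrow> real \<Rightarrow> real" where
  "replication_bound \<alpha> g \<Gamma> = g * \<Gamma> - pos_part (\<alpha> * Lambda g \<Gamma>)"

definition alpha0 :: real where
  "alpha0 = (THE a. 0 < a \<and> a^2 - (a - 1) * sqrt (a + 1) - 2 = 0)"

definition psi :: "real \<Rightarrow> real" where
  "psi \<alpha> = 1 + \<alpha> - (SUP q\<in>{1/2..1}.
      2 * \<alpha> * q + 4 * q * sqrt ((1 - q) * q * (1 + \<alpha>)) - q^2 * (3 * \<alpha> + 1))"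

definition gamma_bar :: "real \<Rightarrow> real" where
  "gamma_bar \<alpha> =
     (if \<alpha> \<le> alpha0 then (1 / (1 + \<alpha>)) * min \<alpha> (psi \<alpha>)
      else if \<alpha> \<le> 2 then \<alpha> / (2 * (1 + \<alpha>)) *
             (1 + (\<alpha> + 5 - 4 * sqrt (\<alpha> + 1)) / (3 * \<alpha> + 1))
      else \<alpha> / (2 * (1 + \<alpha>)))"

end

theory Submission
  imports Defs "HOL-Real_Asymp.Real_Asymp"
begin

text \<open>
  For (i), the closed form of \<open>\<beta>\<^sub>0\<close> writes \<open>2 E\<^sub>0(\<alpha>, \<Gamma>) - \<alpha> log \<Gamma>\<close> in terms of
  \<open>sqrt ((\<Gamma> + 1 - \<alpha>)\<^sup>2 + 4\<alpha>) - \<Gamma> \<longrightarrow> 1 - \<alpha>\<close>, and \<open>2 E\<^sub>0\<close> is eventually below the linear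
  term \<open>\<gamma>\<Gamma>\<close>; (ii) is an identity for \<open>\<Gamma> \<ge> \<alpha>/\<gamma>\<close>.
  The replication bound rests on the expansion
  \<open>\<Phi>(\<rho>, \<Gamma>) = \<Gamma>\<rho>/(1 + \<rho>) - \<rho> log \<Gamma> + (2\<rho> + 1) log (1 + \<rho>) - \<rho> + O(1/\<Gamma>)\<close>,
  uniform in \<open>\<rho> \<in> (0, 1]\<close>. For \<open>g \<ge> 1/3\<close> the supremum defining \<open>\<Lambda>\<close> is then attained at
  \<open>\<rho> = 1\<close> up to \<open>O(1/\<Gamma>)\<close>, and since \<open>\<gamma>\<^sub>\<alpha> = \<alpha>(1/2 - \<gamma>\<^sub>\<alpha>)\<close> the linear terms of
  \<open>\<gamma>\<^sub>\<alpha>\<Gamma> - \<alpha>\<Lambda>\<close> cancel, leaving \<open>\<alpha> log \<Gamma> + \<alpha> log (e/8)\<close>. For general \<open>g\<close>,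
  \<open>\<Lambda>(\<Gamma>)/\<Gamma>\<close> tends to \<open>sup\<^sub>\<rho> (1/(1 + \<rho>) - g/\<rho>)\<close>, and \<open>\<alpha>\<close> times this supremum is below
  \<open>g\<close> once \<open>g\<close> exceeds an explicit threshold, which \<open>gamma_bar \<alpha>\<close> does for \<open>\<alpha> < 2\<close>.
\<close>

section \<open>The converse and spherical cap bounds\<close>

lemma beta0_eq:
  fixes a G :: real
  assumes "0 < a" "0 < G"
  shows "beta0 a G = (G + 1 + a + sqrt ((G + 1 - a)^2 + 4 * a)) / (2 * (1 + a))"
proof -
  have pos: "0 < 1 + a + G" using assms by simp
  have "1 - 4 * G * a / (1 + a + G)^2 = ((1 + a + G)^2 - 4 * G * a) / (1 + a + G)^2"
    using pos by (simp add: field_simps)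
  also have "(1 + a + G)^2 - 4 * G * a = (G + 1 - a)^2 + 4 * a"
    by (simp add: power2_eq_square algebra_simps)
  finally have "1 - 4 * G * a / (1 + a + G)^2 = ((G + 1 - a)^2 + 4 * a) / (1 + a + G)^2" .
  then have "sqrt (1 - 4 * G * a / (1 + a + G)^2) = sqrt ((G + 1 - a)^2 + 4 * a) / (1 + a + G)"
    using pos by (simp add: real_sqrt_divide)
  then show ?thesis
    unfolding beta0_def using pos assms by (simp add: field_simps)
qed

lemma two_E0_minus_ln_eq:
  fixes a G :: real
  defines "D \<equiv> sqrt ((G + 1 - a)^2 + 4 * a) - G"
  assumes a: "0 < a" and G: "0 < G"
  shows "2 * E0 a G - a * ln G = (1 + a - D) / 2 + ln ((1 + a + D) / (2 * (1 + a)))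
           + a * ln ((2 + (1 + a + D) / G) / (2 * (1 + a)))"
proof -
  have "0 \<le> (G + 1 - a)^2 + 4 * a"
    using a G by (intro add_nonneg_nonneg) auto
  then have D0: "0 \<le> D + G"
    unfolding D_def by simp
  have b: "beta0 a G = (2 * G + 1 + a + D) / (2 * (1 + a))"
    using beta0_eq[OF a G] by (simp add: D_def)
  have a1: "1 + a \<noteq> 0"
    using a by simp
  have "0 < beta0 a G"
    unfolding b using D0 a G by (simp add: zero_less_divide_iff)
  then have "ln (beta0 a G) - ln G = ln (beta0 a G / G)"
    using a G by (simp add: ln_div)
  also have "beta0 a G / G = (2 + (1 + a + D) / G) / (2 * (1 + a))"
    unfolding b using a1 G by (simp add: field_simps)
  finally have ln_quot: "ln (beta0 a G) - ln G = ln ((2 + (1 + a + D) / G) / (2 * (1 + a)))" .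
  have ln_arg: "beta0 a G - G / (1 + a) = (1 + a + D) / (2 * (1 + a))"
  proof -
    have "G / (1 + a) = 2 * G / (2 * (1 + a))"
      by (rule mult_divide_mult_cancel_left[symmetric]) simp
    then show ?thesis
      unfolding b by (simp add: diff_divide_distrib[symmetric])
  qed
  have lin: "(1 - beta0 a G) * (1 + a) + G = (1 + a - D) / 2"
    unfolding b using a1 G by (simp add: field_simps)
  have "2 * E0 a G - a * ln G = ((1 - beta0 a G) * (1 + a) + G) + ln (beta0 a G - G / (1 + a))
          + a * (ln (beta0 a G) - ln G)"
    unfolding E0_def by (simp add: algebra_simps)
  then show ?thesis
    unfolding lin ln_arg ln_quot .
qed

lemma two_E0_minus_ln_tendsto:
  fixes a :: real
  assumes "0 < a"
  shows "((\<lambda>G. 2 * E0 a G - a * ln G) \<longlongrightarrow> a - (1 + a) * ln (1 + a)) at_top"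
proof -
  define D where "D G = sqrt ((G + 1 - a)^2 + 4 * a) - G" for G
  have D: "(D \<longlongrightarrow> 1 - a) at_top"
    unfolding D_def using assms by real_asymp
  have inv: "((\<lambda>G::real. 1 / G) \<longlongrightarrow> 0) at_top"
    by real_asymp
  have "((\<lambda>G. (1 + a - D G) / 2 + ln ((1 + a + D G) / (2 * (1 + a)))
             + a * ln ((2 + (1 + a + D G) * (1 / G)) / (2 * (1 + a))))
        \<longlongrightarrow> (1 + a - (1 - a)) / 2 + ln ((1 + a + (1 - a)) / (2 * (1 + a)))
             + a * ln ((2 + (1 + a + (1 - a)) * 0) / (2 * (1 + a)))) at_top"
    using assms by (intro tendsto_intros D inv) auto
  also have "(1 + a - (1 - a)) / 2 + ln ((1 + a + (1 - a)) / (2 * (1 + a)))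
             + a * ln ((2 + (1 + a + (1 - a)) * 0) / (2 * (1 + a))) = a - (1 + a) * ln (1 + a)"
  proof -
    have "(1 + a + (1 - a)) / (2 * (1 + a)) = 1 / (1 + a)"
      "(2 + (1 + a + (1 - a)) * 0) / (2 * (1 + a)) = 1 / (1 + a)"
      using assms by (simp_all add: field_simps)
    moreover have "ln (1 / (1 + a)) = - ln (1 + a)"
      using assms by (simp add: ln_div)
    ultimately show ?thesis
      by (simp add: algebra_simps)
  qed
  finally show ?thesis
  proof (rule Lim_transform_eventually)
    show "\<forall>\<^sub>F G in at_top. (1 + a - D G) / 2 + ln ((1 + a + D G) / (2 * (1 + a)))
             + a * ln ((2 + (1 + a + D G) * (1 / G)) / (2 * (1 + a))) = 2 * E0 a G - a * ln G"
      using eventually_gt_at_top[of 0]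
      by eventually_elim (simp add: two_E0_minus_ln_eq[OF assms] D_def)
  qed
qed

lemma converse_bound_asymptotics:
  fixes \<alpha> \<gamma> :: real
  assumes "0 < \<alpha>" "0 < \<gamma>"
  shows "((\<lambda>\<Gamma>. converse_bound \<alpha> \<gamma> \<Gamma> - \<alpha> * ln \<Gamma> - (\<alpha> - (1 + \<alpha>) * ln (1 + \<alpha>))) \<longlongrightarrow> 0) at_top"
proof -
  define C where "C = \<alpha> - (1 + \<alpha>) * ln (1 + \<alpha>)"
  have lim: "((\<lambda>\<Gamma>. 2 * E0 \<alpha> \<Gamma> - \<alpha> * ln \<Gamma>) \<longlongrightarrow> C) at_top"
    unfolding C_def by (rule two_E0_minus_ln_tendsto[OF assms(1)])
  from lim have "((\<lambda>\<Gamma>. 2 * E0 \<alpha> \<Gamma> - \<alpha> * ln \<Gamma> - C) \<longlongrightarrow> 0) at_top"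
    by (simp add: LIM_zero)
  moreover have "\<forall>\<^sub>F \<Gamma> in at_top. 2 * E0 \<alpha> \<Gamma> - \<alpha> * ln \<Gamma> - C = converse_bound \<alpha> \<gamma> \<Gamma> - \<alpha> * ln \<Gamma> - C"
  proof -
    have "\<forall>\<^sub>F \<Gamma> in at_top. \<alpha> * ln \<Gamma> + (C + 1) \<le> \<gamma> * \<Gamma>"
      using assms by real_asymp
    moreover have "\<forall>\<^sub>F \<Gamma> in at_top. 2 * E0 \<alpha> \<Gamma> - \<alpha> * ln \<Gamma> < C + 1"
      using order_tendstoD(2)[OF lim, of "C + 1"] by simp
    ultimately show ?thesis
      by eventually_elim (auto simp: converse_bound_def min_def)
  qed
  ultimately show ?thesis
    unfolding C_def by (rule Lim_transform_eventually)
qed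

lemma cap_bound_asymptotics:
  fixes \<alpha> \<gamma> :: real
  assumes "0 < \<alpha>" "0 < \<gamma>"
  shows "((\<lambda>\<Gamma>. cap_bound \<alpha> \<gamma> \<Gamma> - \<alpha> * ln \<Gamma> - (\<alpha> * ln (\<gamma> / \<alpha>) + \<alpha>)) \<longlongrightarrow> 0) at_top"
proof (rule Lim_transform_eventually[OF tendsto_const])
  show "\<forall>\<^sub>F \<Gamma> in at_top. 0 = cap_bound \<alpha> \<gamma> \<Gamma> - \<alpha> * ln \<Gamma> - (\<alpha> * ln (\<gamma> / \<alpha>) + \<alpha>)"
    using eventually_ge_at_top[of "\<alpha> / \<gamma>"]
  proof eventually_elim
    case (elim \<Gamma>)
    moreover have "0 < \<alpha> / \<gamma>"
      using assms by simp
    ultimately have "0 < \<Gamma>"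
      by linarith
    then have "ln (\<gamma> * \<Gamma> / \<alpha>) = ln (\<gamma> / \<alpha>) + ln \<Gamma>"
      using assms by (simp add: ln_mult_pos[symmetric])
    with elim show ?case
      by (simp add: cap_bound_def algebra_simps)
  qed
qed

section \<open>Large-\<open>\<Gamma>\<close> expansion of \<open>\<Phi>\<close>\<close>

text \<open>
  Here \<open>\<eta> \<approx> \<Gamma>/(1 + \<rho>)\<^sup>2\<close> and \<open>sqrt (4\<eta>\<Gamma> + 1) \<approx> 2\<Gamma>/(1 + \<rho>)\<close>; substituting these into
  \<open>Phi\<close> leaves the following, with an error of order \<open>1/\<Gamma>\<close> uniformly in \<open>\<rho> \<in> (0, 1]\<close>.
\<close>

definition Phi_approx :: "real \<Rightarrow> real \<Rightarrow> real" where
  "Phi_approx \<rho> \<Gamma> = \<Gamma> * \<rho> / (1 + \<rho>) - \<rho> * ln \<Gamma> + (2 * \<rho> + 1) * ln (1 + \<rho>) - \<rho>"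

lemma sqrt_square_diff_bounds:
  fixes x c :: real
  assumes "0 < x" "0 \<le> c" "4 * c \<le> x^2"
  shows "x - 4 * c / x \<le> sqrt (x^2 - 4 * c)" "sqrt (x^2 - 4 * c) \<le> x"
proof -
  have "16 * c^2 \<le> 4 * c * x^2"
    using assms(2,3) mult_left_mono[of "4 * c" "x^2" "4 * c"] by (simp add: power2_eq_square)
  then have "16 * c^2 / x^2 \<le> 4 * c"
    using assms(1) by (simp add: divide_le_eq)
  moreover have "(x - 4 * c / x)^2 = x^2 - 8 * c + 16 * c^2 / x^2"
    using assms(1) by (simp add: power2_eq_square field_simps)
  ultimately show "x - 4 * c / x \<le> sqrt (x^2 - 4 * c)"
    by (intro real_le_rsqrt) simp
  have "sqrt (x^2 - 4 * c) \<le> sqrt (x^2)"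
    using assms(2) by (intro real_sqrt_le_mono) simp
  then show "sqrt (x^2 - 4 * c) \<le> x"
    using assms(1) by simp
qed

lemma eta_fn_eq:
  fixes \<rho> \<Gamma> :: real
  assumes "0 < \<rho>" "\<rho> \<le> 1" "8 \<le> \<Gamma>"
  obtains t where "eta_fn \<rho> \<Gamma> = t * \<Gamma> / (1 + \<rho>)^2" "1 - 16 / \<Gamma>^2 \<le> t" "t \<le> 1"
proof
  define c where "c = (\<rho>^2 + 1) * (\<rho> + 1)^2"
  define s where "s = sqrt (\<Gamma>^2 - 4 * c)"
  have "\<rho>^2 + 1 \<le> 2" "(\<rho> + 1)^2 \<le> 4"
    using assms power_mono[of "\<rho> + 1" 2 2] by (auto simp: power_le_one)
  then have c8: "c \<le> 8"
    unfolding c_def using mult_mono[of "\<rho>^2 + 1" 2 "(\<rho> + 1)^2" 4] by simp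
  have c0: "0 \<le> c"
    unfolding c_def by simp
  have G: "0 < \<Gamma>" "64 \<le> \<Gamma>^2"
    using assms(3) power_mono[of 8 \<Gamma> 2] by auto
  then have s: "\<Gamma> - 4 * c / \<Gamma> \<le> s" "s \<le> \<Gamma>"
    unfolding s_def using sqrt_square_diff_bounds[OF G(1) c0] c8 by auto
  define t where "t = (\<Gamma> + s) / (2 * \<Gamma>)"
  have "eta_fn \<rho> \<Gamma> = (\<Gamma> + s) / (2 * (1 + \<rho>)^2)"
    unfolding eta_fn_def s_def c_def by (simp add: add.commute)
  also have "\<dots> = t * \<Gamma> / (1 + \<rho>)^2"
    unfolding t_def using G assms(1) by (simp add: field_simps)
  finally show "eta_fn \<rho> \<Gamma> = t * \<Gamma> / (1 + \<rho>)^2" .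
  show "t \<le> 1"
    unfolding t_def using s G by simp
  have "1 - t = (\<Gamma> - s) / (2 * \<Gamma>)"
    unfolding t_def using G by (simp add: field_simps)
  also have "\<dots> \<le> (4 * c / \<Gamma>) / (2 * \<Gamma>)"
    using s G by (intro divide_right_mono) auto
  also have "\<dots> \<le> 16 / \<Gamma>^2"
    using c8 G by (simp add: power2_eq_square field_simps)
  finally show "1 - 16 / \<Gamma>^2 \<le> t"
    by simp
qed

lemma abs_diff_le_of_abs_square_diff_le:
  fixes p a e :: real
  assumes "0 < p" "0 \<le> a" "\<bar>p^2 - a^2\<bar> \<le> e"
  shows "\<bar>p - a\<bar> \<le> e / p"
proof -
  have "\<bar>p - a\<bar> * p \<le> \<bar>p - a\<bar> * (p + a)"
    using assms by (intro mult_left_mono) auto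
  also have "\<dots> = \<bar>(p - a) * (p + a)\<bar>"
    using assms by (simp add: abs_mult)
  also have "\<dots> = \<bar>p^2 - a^2\<bar>"
    by (simp add: power2_eq_square algebra_simps)
  finally show ?thesis
    using assms by (simp add: pos_le_divide_eq)
qed

lemma Phi_decomposition:
  fixes \<rho> t \<Gamma> :: real
  defines "u \<equiv> 1 + \<rho>"
  defines "A \<equiv> sqrt (4 * t * \<Gamma>^2 / u^2 + 1)"
  assumes \<rho>: "0 < \<rho>" and t: "0 < t" and \<Gamma>: "0 < \<Gamma>"
    and eta: "eta_fn \<rho> \<Gamma> = t * \<Gamma> / u^2"
  shows "Phi \<rho> \<Gamma> = Phi_approx \<rho> \<Gamma> + (\<Gamma> * (1 + t) / u - A) - \<rho> * ln t
           + ln ((A + 1) * u / (2 * t * \<Gamma>))"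
proof -
  define \<eta> where "\<eta> = t * \<Gamma> / u^2"
  have u: "0 < u"
    unfolding u_def using \<rho> by simp
  have A: "A = sqrt (4 * \<eta> * \<Gamma> + 1)" "0 \<le> A"
    unfolding A_def \<eta>_def using t by (simp_all add: power2_eq_square)
  have ln_eta: "ln \<eta> = ln t + ln \<Gamma> - 2 * ln u"
    unfolding \<eta>_def using t \<Gamma> u by (simp add: ln_div ln_mult ln_realpow)
  have "(A + 1) / (2 * \<eta>) = ((A + 1) * u / (2 * t * \<Gamma>)) * u"
    unfolding \<eta>_def using u by (simp add: power2_eq_square field_simps)
  moreover have "0 < (A + 1) * u / (2 * t * \<Gamma>)"
    using A(2) t \<Gamma> u by simp
  ultimately have ln_A: "ln ((A + 1) / (2 * \<eta>)) = ln ((A + 1) * u / (2 * t * \<Gamma>)) + ln u"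
    using u by (simp only: ln_mult_pos)
  have "(\<rho> + 1) * \<eta> = t * \<Gamma> / u"
    unfolding \<eta>_def u_def using \<rho> by (simp add: power2_eq_square add.commute)
  moreover have "\<Gamma> * (1 + t) / u + \<Gamma> * \<rho> / u = (t * \<Gamma> + \<Gamma> * u) / u"
    unfolding add_divide_distrib[symmetric] u_def by (simp add: algebra_simps)
  moreover have "(t * \<Gamma> + \<Gamma> * u) / u = t * \<Gamma> / u + \<Gamma>"
    using u by (simp add: add_divide_distrib)
  ultimately have lin: "(\<rho> + 1) * \<eta> + \<Gamma> = \<Gamma> * (1 + t) / u + \<Gamma> * \<rho> / u"
    by simp
  have "Phi \<rho> \<Gamma> = \<rho> * (\<eta> - 1 - ln \<eta>) + \<eta> + \<Gamma> + ln ((A + 1) / (2 * \<eta>)) - A"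
    unfolding Phi_def Let_def eta \<eta>_def[symmetric] A(1) ..
  also have "\<dots> = ((\<rho> + 1) * \<eta> + \<Gamma>) - A - \<rho> - \<rho> * ln \<eta> + ln ((A + 1) / (2 * \<eta>))"
    by (simp add: algebra_simps)
  finally show ?thesis
    unfolding lin ln_eta ln_A Phi_approx_def u_def by (simp add: algebra_simps)
qed

lemma sqrt_term_error_le:
  fixes t u \<Gamma> :: real
  assumes t: "1 / 2 \<le> t" "t \<le> 1" and \<Gamma>: "0 < \<Gamma>" "\<Gamma> * (1 - t) \<le> 1 / 2"
    and u: "1 < u" "u \<le> 2"
  shows "\<bar>\<Gamma> * (1 + t) / u - sqrt (4 * t * \<Gamma>^2 / u^2 + 1)\<bar> \<le> 2 / \<Gamma>"
proof -
  define A where "A = sqrt (4 * t * \<Gamma>^2 / u^2 + 1)"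
  define P where "P = \<Gamma> * (1 + t) / u"
  have A0: "0 \<le> A"
    unfolding A_def using t by (intro real_sqrt_ge_zero add_nonneg_nonneg) auto
  have "A^2 = 4 * t * \<Gamma>^2 / u^2 + 1"
    unfolding A_def using t by simp
  then have "P^2 - A^2 = (\<Gamma> * (1 - t) / u)^2 - 1"
    unfolding P_def using u by (simp add: power2_eq_square field_simps)
  moreover have "\<Gamma> * (1 - t) / u \<le> 1"
    using \<Gamma> u by (simp add: divide_le_eq)
  moreover have "0 \<le> \<Gamma> * (1 - t) / u"
    using t \<Gamma> u by simp
  ultimately have "\<bar>P^2 - A^2\<bar> \<le> 1"
    by (simp add: abs_le_iff power_le_one)
  moreover have P: "\<Gamma> / 2 \<le> P"
  proof -
    have "\<Gamma> / 2 \<le> \<Gamma> * (1 + t) / 2"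
      using t \<Gamma> by simp
    also have "\<dots> \<le> P"
      unfolding P_def using u t \<Gamma> by (intro divide_left_mono) auto
    finally show ?thesis .
  qed
  ultimately have "\<bar>P - A\<bar> \<le> 1 / P"
    using abs_diff_le_of_abs_square_diff_le[OF _ A0, of P 1] \<Gamma> by simp
  also have "\<dots> \<le> 1 / (\<Gamma> / 2)"
    using P \<Gamma> by (intro divide_left_mono) auto
  finally show ?thesis
    unfolding P_def A_def by simp
qed

lemma minus_ln_le_twice_one_minus:
  fixes t :: real
  assumes "1 / 2 \<le> t" "t \<le> 1"
  shows "- ln t \<le> 2 * (1 - t)"
proof -
  have "- ln t = ln (1 / t)"
    using assms by (simp add: ln_div)
  also have "\<dots> \<le> 1 / t - 1"
    using assms by (intro ln_le_minus_one) simp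
  also have "\<dots> = (1 - t) / t"
    using assms by (simp add: field_simps)
  also have "\<dots> \<le> (1 - t) / (1 / 2)"
    using assms by (intro divide_left_mono) auto
  finally show ?thesis
    by simp
qed

lemma ln_sqrt_term_bounds:
  fixes t u \<Gamma> :: real
  defines "y \<equiv> (sqrt (4 * t * \<Gamma>^2 / u^2 + 1) + 1) * u / (2 * t * \<Gamma>)"
  assumes t: "1 / 2 \<le> t" "t \<le> 1" and \<Gamma>: "4 \<le> \<Gamma>" "\<Gamma> * (1 - t) \<le> 1 / 2"
    and u: "1 < u" "u \<le> 2"
  shows "0 \<le> ln y" "ln y \<le> 4 / \<Gamma>"
proof -
  define A where "A = sqrt (4 * t * \<Gamma>^2 / u^2 + 1)"
  have \<Gamma>0: "0 < \<Gamma>"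
    using \<Gamma> by simp
  have "t^2 \<le> t"
    using t by (simp add: power2_eq_square mult_left_le)
  have "(2 * t * \<Gamma> / u)^2 = 4 * t^2 * \<Gamma>^2 / u^2"
    by (simp add: power_mult_distrib power_divide)
  also have "\<dots> \<le> 4 * t * \<Gamma>^2 / u^2"
    using \<open>t^2 \<le> t\<close> by (intro divide_right_mono mult_right_mono) auto
  finally have "2 * t * \<Gamma> / u \<le> A"
    unfolding A_def by (intro real_le_rsqrt) simp
  then have y1: "1 \<le> y"
    unfolding y_def A_def[symmetric] using u t \<Gamma>0 by (simp add: field_simps)
  then show "0 \<le> ln y"
    by simp
  have "ln y \<le> y - 1"
    using y1 by (intro ln_le_minus_one) simp
  also have "y - 1 = (A + 1 - 2 * t * \<Gamma> / u) * (u / (2 * t * \<Gamma>))"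
    unfolding y_def A_def[symmetric] using u t \<Gamma>0 by (simp add: field_simps)
  also have "\<dots> \<le> 2 * (2 / \<Gamma>)"
  proof (rule mult_mono)
    have "\<Gamma> * (1 + t) / u = \<Gamma> * (1 - t) / u + 2 * t * \<Gamma> / u"
      unfolding add_divide_distrib[symmetric] by (simp add: algebra_simps)
    moreover have "\<Gamma> * (1 - t) / u \<le> 1 / 2"
      using \<Gamma> u by (intro mult_imp_div_pos_le) auto
    moreover have "2 / \<Gamma> \<le> 1 / 2"
      using \<Gamma> by simp
    ultimately show "A + 1 - 2 * t * \<Gamma> / u \<le> 2"
      using sqrt_term_error_le[OF t \<Gamma>0 \<Gamma>(2) u] unfolding A_def by linarith
    show "u / (2 * t * \<Gamma>) \<le> 2 / \<Gamma>"
      using u t \<Gamma>0 by (simp add: field_simps)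
  qed (use u t \<Gamma>0 in auto)
  finally show "ln y \<le> 4 / \<Gamma>"
    by simp
qed

lemma Phi_approx_error:
  fixes \<rho> \<Gamma> :: real
  assumes \<rho>: "0 < \<rho>" "\<rho> \<le> 1" and \<Gamma>: "32 \<le> \<Gamma>"
  shows "\<bar>Phi \<rho> \<Gamma> - Phi_approx \<rho> \<Gamma>\<bar> \<le> 9 / \<Gamma>"
proof -
  have "8 \<le> \<Gamma>"
    using \<Gamma> by simp
  then obtain t where eta: "eta_fn \<rho> \<Gamma> = t * \<Gamma> / (1 + \<rho>)^2"
    and t: "1 - 16 / \<Gamma>^2 \<le> t" "t \<le> 1"
    by (rule eta_fn_eq[OF \<rho>])
  have \<Gamma>0: "0 < \<Gamma>"
    using \<Gamma> by simp
  have u: "1 < 1 + \<rho>" "1 + \<rho> \<le> 2"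
    using \<rho> by auto
  have "16 / \<Gamma>^2 \<le> 16 / 32^2"
    using \<Gamma> by (intro divide_left_mono power_mono) auto
  then have t_half: "1 / 2 \<le> t"
    using t by simp
  have "\<Gamma> * (1 - t) \<le> \<Gamma> * (16 / \<Gamma>^2)"
    using t \<Gamma>0 by (intro mult_left_mono) auto
  also have "\<dots> \<le> 1 / 2"
    using \<Gamma> \<Gamma>0 by (simp add: power2_eq_square field_simps)
  finally have \<Gamma>_1t: "\<Gamma> * (1 - t) \<le> 1 / 2" .
  have "0 \<le> \<rho> * (- ln t)" "\<rho> * (- ln t) \<le> 1 * (2 * (1 - t))"
    using \<rho> t t_half mult_mono[OF \<rho>(2) minus_ln_le_twice_one_minus[OF t_half t(2)]]
    by (auto simp: mult_nonneg_nonpos)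
  moreover have "2 * (1 - t) \<le> 1 / \<Gamma>"
    using \<Gamma>_1t \<Gamma>0 by (simp add: field_simps)
  ultimately show ?thesis
    using Phi_decomposition[OF \<rho>(1) _ \<Gamma>0, of t] eta t_half
      sqrt_term_error_le[OF t_half t(2) \<Gamma>0 \<Gamma>_1t u] ln_sqrt_term_bounds[OF t_half t(2) _ \<Gamma>_1t u] \<Gamma>
    by (simp add: abs_le_iff)
qed

section \<open>The replication bound for \<open>\<alpha> \<ge> 2\<close>\<close>

text \<open>
  The slack \<open>(1 - \<rho>)(\<Gamma>/12 - log 2)\<close> is what absorbs the \<open>O(1/\<Gamma>)\<close> error of \<open>Phi\<close> after
  dividing by a small \<open>\<rho>\<close>.
\<close>

lemma Phi_approx_le_at_one:
  fixes g \<rho> \<Gamma> :: real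
  assumes g: "1 / 3 \<le> g" and \<rho>: "0 < \<rho>" "\<rho> \<le> 1" and \<Gamma>: "0 \<le> \<Gamma>"
  shows "Phi_approx \<rho> \<Gamma> - g * \<Gamma> \<le> \<rho> * (Phi_approx 1 \<Gamma> - g * \<Gamma>) - (1 - \<rho>) * (\<Gamma> / 12 - ln 2)"
proof -
  have "4 * \<rho> \<le> (1 + \<rho>)^2"
    using sum_squares_ge_zero[of "1 - \<rho>" 0] by (simp add: power2_eq_square algebra_simps)
  then have "\<rho> / (1 + \<rho>) \<le> (1 + \<rho>) / 4"
    using \<rho> by (simp add: field_simps power2_eq_square)
  then have "\<Gamma> * (\<rho> / (1 + \<rho>)) \<le> \<Gamma> * ((1 + \<rho>) / 4)"
    using \<Gamma> by (rule mult_left_mono)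
  moreover have "\<Gamma> * (1 + \<rho>) / 4 = \<Gamma> / 4 + \<rho> * \<Gamma> / 4"
    by (simp add: algebra_simps)
  ultimately have h1: "\<Gamma> * \<rho> / (1 + \<rho>) \<le> \<Gamma> / 4 + \<rho> * \<Gamma> / 4"
    by (simp only: times_divide_eq_right)
  have "(2 * \<rho> + 1) * ln (1 + \<rho>) \<le> (2 * \<rho> + 1) * ln 2"
    using \<rho> by (intro mult_left_mono) auto
  then have h2: "2 * \<rho> * ln (1 + \<rho>) + ln (1 + \<rho>) \<le> 2 * \<rho> * ln 2 + ln 2"
    by (simp add: algebra_simps)
  have "\<Gamma> * (1 - \<rho>) / 3 \<le> g * (\<Gamma> * (1 - \<rho>))"
    using g \<rho> \<Gamma> mult_right_mono[OF g, of "\<Gamma> * (1 - \<rho>)"] by simp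
  then have h3: "\<Gamma> / 3 - \<rho> * \<Gamma> / 3 \<le> g * \<Gamma> - \<rho> * (g * \<Gamma>)"
    by (simp add: algebra_simps diff_divide_distrib)
  have "Phi_approx \<rho> \<Gamma> - g * \<Gamma>
      = \<Gamma> * \<rho> / (1 + \<rho>) - \<rho> * ln \<Gamma> + 2 * \<rho> * ln (1 + \<rho>) + ln (1 + \<rho>) - \<rho> - g * \<Gamma>"
    unfolding Phi_approx_def by (simp add: algebra_simps)
  moreover have "\<rho> * (Phi_approx 1 \<Gamma> - g * \<Gamma>) - (1 - \<rho>) * (\<Gamma> / 12 - ln 2)
      = \<rho> * \<Gamma> / 2 - \<rho> * ln \<Gamma> + 2 * \<rho> * ln 2 - \<rho> - \<rho> * (g * \<Gamma>)
        - \<Gamma> / 12 + \<rho> * \<Gamma> / 12 + ln 2"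
    unfolding Phi_approx_def by (simp add: field_simps)
  ultimately show ?thesis
    using h1 h2 h3 by linarith
qed

lemma Phi_quotient_le_at_one:
  fixes g \<rho> \<Gamma> :: real
  assumes g: "1 / 3 \<le> g" and \<rho>: "0 < \<rho>" "\<rho> \<le> 1" and \<Gamma>: "32 \<le> \<Gamma>"
  shows "(Phi \<rho> \<Gamma> - g * \<Gamma>) / \<rho> \<le> Phi_approx 1 \<Gamma> - g * \<Gamma> + 18 / \<Gamma>"
proof -
  have "\<Gamma> / 12 - ln 2 - 18 / \<Gamma> \<ge> 0"
  proof -
    have "18 / \<Gamma> \<le> 1" "ln (2::real) \<le> 1"
      using \<Gamma> ln_2_less_1 by auto
    then show ?thesis
      using \<Gamma> by linarith
  qed
  then have "0 \<le> (1 - \<rho>) * (\<Gamma> / 12 - ln 2 - 18 / \<Gamma>)"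
    using \<rho> by simp
  moreover have "9 / \<Gamma> \<le> 18 * \<rho> / \<Gamma> + 18 * (1 - \<rho>) / \<Gamma>"
    using \<Gamma> by (simp add: field_simps)
  ultimately have "Phi_approx \<rho> \<Gamma> + 9 / \<Gamma> - g * \<Gamma> \<le> \<rho> * (Phi_approx 1 \<Gamma> - g * \<Gamma> + 18 / \<Gamma>)"
    using Phi_approx_le_at_one[OF g \<rho>, of \<Gamma>] \<Gamma> by (simp add: algebra_simps)
  moreover have "Phi \<rho> \<Gamma> \<le> Phi_approx \<rho> \<Gamma> + 9 / \<Gamma>"
    using Phi_approx_error[OF \<rho> \<Gamma>] by (simp add: abs_le_iff)
  ultimately show ?thesis
    using \<rho> by (simp add: pos_divide_le_eq mult.commute)
qed

lemma Lambda_approx_at_one: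
  fixes g \<Gamma> :: real
  assumes g: "1 / 3 \<le> g" and \<Gamma>: "32 \<le> \<Gamma>"
  shows "\<bar>Lambda g \<Gamma> - (Phi_approx 1 \<Gamma> - g * \<Gamma>)\<bar> \<le> 18 / \<Gamma>"
proof -
  have quot: "\<And>\<rho>. \<rho> \<in> {0<..1} \<Longrightarrow> (Phi \<rho> \<Gamma> - g * \<Gamma>) / \<rho> \<le> Phi_approx 1 \<Gamma> - g * \<Gamma> + 18 / \<Gamma>"
    using Phi_quotient_le_at_one[OF g _ _ \<Gamma>] by auto
  then have "Lambda g \<Gamma> \<le> Phi_approx 1 \<Gamma> - g * \<Gamma> + 18 / \<Gamma>"
    unfolding Lambda_def by (intro cSUP_least) auto
  moreover have "(Phi 1 \<Gamma> - g * \<Gamma>) / 1 \<le> Lambda g \<Gamma>"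
    unfolding Lambda_def using quot by (intro cSUP_upper bdd_aboveI2) auto
  moreover have "Phi_approx 1 \<Gamma> - 9 / \<Gamma> \<le> Phi 1 \<Gamma>"
    using Phi_approx_error[of 1 \<Gamma>] \<Gamma> by (simp add: abs_le_iff)
  moreover have "9 / \<Gamma> \<le> 18 / \<Gamma>"
    using \<Gamma> by (simp add: divide_right_mono)
  ultimately show ?thesis
    by (simp add: abs_le_iff)
qed

lemma replication_bound_asymptotics:
  fixes \<alpha> :: real
  defines "\<gamma> \<equiv> \<alpha> / (2 * (1 + \<alpha>))"
  assumes \<alpha>: "2 \<le> \<alpha>"
  shows "((\<lambda>\<Gamma>. replication_bound \<alpha> \<gamma> \<Gamma> - \<alpha> * ln \<Gamma> - \<alpha> * ln (exp 1 / 8)) \<longlongrightarrow> 0) at_top"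
proof (rule Lim_null_comparison)
  have g3: "1 / 3 \<le> \<gamma>"
    unfolding \<gamma>_def using \<alpha> by (simp add: field_simps)
  have g_half: "\<gamma> = \<alpha> * (1 / 2 - \<gamma>)"
    unfolding \<gamma>_def using \<alpha> by (simp add: field_simps)
  have ln8: "ln (exp 1 / 8) = 1 - 3 * ln (2::real)"
    using ln_realpow[of 2 3] by (simp add: ln_div)
  have "0 < 1 / 2 - \<gamma>"
    unfolding \<gamma>_def using \<alpha> by (simp add: field_simps)
  then have "\<forall>\<^sub>F \<Gamma> in at_top. 0 \<le> \<Gamma> * (1 / 2 - \<gamma>) - ln \<Gamma> + 3 * ln 2 - 1 - 18 / \<Gamma>"
    by real_asymp
  then show "\<forall>\<^sub>F \<Gamma> in at_top. norm (replication_bound \<alpha> \<gamma> \<Gamma> - \<alpha> * ln \<Gamma> - \<alpha> * ln (exp 1 / 8))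
               \<le> \<alpha> * (18 / \<Gamma>)"
    using eventually_ge_at_top[of 32]
  proof eventually_elim
    case (elim \<Gamma>)
    define e where "e = Lambda \<gamma> \<Gamma> - (Phi_approx 1 \<Gamma> - \<gamma> * \<Gamma>)"
    have e: "\<bar>e\<bar> \<le> 18 / \<Gamma>"
      unfolding e_def by (rule Lambda_approx_at_one[OF g3 elim(2)])
    have approx: "Phi_approx 1 \<Gamma> - \<gamma> * \<Gamma> = \<Gamma> * (1 / 2 - \<gamma>) - ln \<Gamma> + 3 * ln 2 - 1"
      unfolding Phi_approx_def by (simp add: algebra_simps)
    have "0 \<le> Lambda \<gamma> \<Gamma>"
      using e elim(1) unfolding e_def approx by (simp add: abs_le_iff)
    then have "replication_bound \<alpha> \<gamma> \<Gamma> = \<gamma> * \<Gamma> - \<alpha> * Lambda \<gamma> \<Gamma>"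
      unfolding replication_bound_def pos_part_def using \<alpha> by simp
    also have "\<dots> = \<alpha> * ln \<Gamma> + \<alpha> * ln (exp 1 / 8) - \<alpha> * e"
      unfolding e_def approx ln8 by (subst (1) g_half) (simp add: algebra_simps)
    finally show ?case
      using mult_left_mono[OF e, of \<alpha>] \<alpha> by (simp add: abs_mult)
  qed
  show "((\<lambda>\<Gamma>. \<alpha> * (18 / \<Gamma>)) \<longlongrightarrow> 0) at_top"
    by real_asymp
qed

section \<open>Linear growth rate of \<open>\<Lambda>\<close>\<close>

definition Lambda_rate :: "real \<Rightarrow> real \<Rightarrow> real" where
  "Lambda_rate g \<rho> = 1 / (1 + \<rho>) - g / \<rho>"

lemma Lambda_rate_le_one:
  fixes g \<rho> :: real
  assumes "0 \<le> g" "0 < \<rho>"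
  shows "Lambda_rate g \<rho> \<le> 1"
proof -
  have "1 / (1 + \<rho>) \<le> 1" "0 \<le> g / \<rho>"
    using assms by simp_all
  then show ?thesis
    unfolding Lambda_rate_def by linarith
qed

lemma bdd_above_Lambda_rate: "0 \<le> g \<Longrightarrow> bdd_above (Lambda_rate g ` {0<..1})"
  using Lambda_rate_le_one by (intro bdd_aboveI2[of _ _ 1]) auto

lemma Phi_quotient_bounds:
  fixes g \<rho> \<Gamma> :: real
  assumes \<rho>: "0 < \<rho>" "\<rho> \<le> 1" and \<Gamma>: "32 \<le> \<Gamma>"
  shows "\<Gamma> * Lambda_rate g \<rho> - ln \<Gamma> - 1 - 9 / (\<Gamma> * \<rho>) \<le> (Phi \<rho> \<Gamma> - g * \<Gamma>) / \<rho>"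
    and "(Phi \<rho> \<Gamma> - g * \<Gamma>) / \<rho> \<le> \<Gamma> * Lambda_rate g \<rho> + 2 + 9 / (\<Gamma> * \<rho>)"
proof -
  have err: "\<bar>(Phi \<rho> \<Gamma> - g * \<Gamma>) / \<rho> - (Phi_approx \<rho> \<Gamma> - g * \<Gamma>) / \<rho>\<bar> \<le> 9 / (\<Gamma> * \<rho>)"
  proof -
    have "\<bar>(Phi \<rho> \<Gamma> - g * \<Gamma>) / \<rho> - (Phi_approx \<rho> \<Gamma> - g * \<Gamma>) / \<rho>\<bar>
          = \<bar>Phi \<rho> \<Gamma> - Phi_approx \<rho> \<Gamma>\<bar> / \<rho>"
      using \<rho> by (simp add: diff_divide_distrib[symmetric])
    also have "\<dots> \<le> (9 / \<Gamma>) / \<rho>"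
      using Phi_approx_error[OF \<rho> \<Gamma>] \<rho> by (intro divide_right_mono) auto
    finally show ?thesis
      by simp
  qed
  have quot: "(Phi_approx \<rho> \<Gamma> - g * \<Gamma>) / \<rho>
      = \<Gamma> * Lambda_rate g \<rho> - ln \<Gamma> + (2 + 1 / \<rho>) * ln (1 + \<rho>) - 1"
  proof -
    have "(2 * \<rho> + 1) * ln (1 + \<rho>) / \<rho> = (2 + 1 / \<rho>) * ln (1 + \<rho>)"
      using \<rho> by (simp add: field_simps)
    then show ?thesis
      unfolding Phi_approx_def Lambda_rate_def using \<rho>
      by (simp add: diff_divide_distrib add_divide_distrib right_diff_distrib)
  qed
  have "0 \<le> (2 + 1 / \<rho>) * ln (1 + \<rho>)"
    using \<rho> by simp
  moreover have "(2 + 1 / \<rho>) * ln (1 + \<rho>) \<le> (2 + 1 / \<rho>) * \<rho>"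
    using \<rho> by (intro mult_left_mono ln_add_one_self_le_self) auto
  moreover have "(2 + 1 / \<rho>) * \<rho> \<le> 3"
    using \<rho> by (simp add: algebra_simps)
  moreover have "0 \<le> ln \<Gamma>"
    using \<Gamma> by simp
  ultimately show "\<Gamma> * Lambda_rate g \<rho> - ln \<Gamma> - 1 - 9 / (\<Gamma> * \<rho>) \<le> (Phi \<rho> \<Gamma> - g * \<Gamma>) / \<rho>"
    and "(Phi \<rho> \<Gamma> - g * \<Gamma>) / \<rho> \<le> \<Gamma> * Lambda_rate g \<rho> + 2 + 9 / (\<Gamma> * \<rho>)"
    using err unfolding quot by (simp_all add: abs_le_iff)
qed

lemma Lambda_rate_plus_error_le:
  fixes g \<rho> \<Gamma> :: real
  assumes g: "0 < g" and \<rho>: "0 < \<rho>" "\<rho> \<le> 1" and \<Gamma>: "0 < \<Gamma>"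
    and large: "\<Gamma> / 2 + g * \<Gamma> + 9 \<le> g * \<Gamma>^2"
  shows "\<Gamma> * Lambda_rate g \<rho> + 9 / (\<Gamma> * \<rho>) \<le> \<Gamma> * (SUP r\<in>{0<..1}. Lambda_rate g r) + 9"
proof -
  define M where "M = (SUP r\<in>{0<..1}. Lambda_rate g r)"
  have rate_le_M: "Lambda_rate g r \<le> M" if "r \<in> {0<..1}" for r
    unfolding M_def using that g by (intro cSUP_upper bdd_above_Lambda_rate) auto
  show ?thesis
  proof (cases "1 \<le> \<Gamma> * \<rho>")
    case True
    then have "9 / (\<Gamma> * \<rho>) \<le> 9"
      by (simp add: divide_le_eq)
    moreover have "\<Gamma> * Lambda_rate g \<rho> \<le> \<Gamma> * M"
      using rate_le_M[of \<rho>] \<rho> \<Gamma> by (simp add: mult_left_mono)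
    ultimately show ?thesis
      unfolding M_def by linarith
  next
    case False
    have "\<Gamma> * Lambda_rate g \<rho> + 9 / (\<Gamma> * \<rho>) = \<Gamma> / (1 + \<rho>) - (g * \<Gamma>^2 - 9) / (\<Gamma> * \<rho>)"
      unfolding Lambda_rate_def using \<rho> \<Gamma> by (simp add: diff_divide_distrib right_diff_distrib power2_eq_square)
    also have "\<dots> \<le> \<Gamma> - (g * \<Gamma>^2 - 9)"
    proof -
      have "0 \<le> g * \<Gamma>"
        using g \<Gamma> by simp
      then have "(g * \<Gamma>^2 - 9) * (\<Gamma> * \<rho>) \<le> g * \<Gamma>^2 - 9"
        using False large \<Gamma> by (intro mult_left_le) auto
      then have "g * \<Gamma>^2 - 9 \<le> (g * \<Gamma>^2 - 9) / (\<Gamma> * \<rho>)"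
        using \<rho> \<Gamma> by (simp add: le_divide_eq)
      moreover have "\<Gamma> / (1 + \<rho>) \<le> \<Gamma>"
        using \<rho> \<Gamma> by (simp add: divide_le_eq)
      ultimately show ?thesis
        by linarith
    qed
    also have "\<dots> \<le> \<Gamma> * Lambda_rate g 1"
      using large unfolding Lambda_rate_def by (simp add: algebra_simps)
    also have "\<dots> \<le> \<Gamma> * M"
      using rate_le_M[of 1] \<Gamma> by (simp add: mult_left_mono)
    finally show ?thesis
      unfolding M_def by linarith
  qed
qed

lemma Lambda_bounds:
  fixes g \<Gamma> :: real
  assumes g: "0 < g" and \<Gamma>: "32 \<le> \<Gamma>" and large: "\<Gamma> / 2 + g * \<Gamma> + 9 \<le> g * \<Gamma>^2"
  shows "Lambda g \<Gamma> \<le> \<Gamma> * (SUP r\<in>{0<..1}. Lambda_rate g r) + 11"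
    and "\<And>\<rho>. 0 < \<rho> \<Longrightarrow> \<rho> \<le> 1 \<Longrightarrow> \<Gamma> * Lambda_rate g \<rho> - ln \<Gamma> - 1 - 9 / (\<Gamma> * \<rho>) \<le> Lambda g \<Gamma>"
proof -
  have upper: "(Phi \<rho> \<Gamma> - g * \<Gamma>) / \<rho> \<le> \<Gamma> * (SUP r\<in>{0<..1}. Lambda_rate g r) + 11"
    if "\<rho> \<in> {0<..1}" for \<rho>
    using that Phi_quotient_bounds(2)[of \<rho> \<Gamma> g] Lambda_rate_plus_error_le[OF g _ _ _ large, of \<rho>] \<Gamma>
    by auto
  then show "Lambda g \<Gamma> \<le> \<Gamma> * (SUP r\<in>{0<..1}. Lambda_rate g r) + 11"
    unfolding Lambda_def by (intro cSUP_least) auto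
  fix \<rho> :: real
  assume "0 < \<rho>" "\<rho> \<le> 1"
  moreover have "(Phi \<rho> \<Gamma> - g * \<Gamma>) / \<rho> \<le> Lambda g \<Gamma>"
    unfolding Lambda_def using upper \<open>0 < \<rho>\<close> \<open>\<rho> \<le> 1\<close> by (intro cSUP_upper bdd_aboveI2) auto
  ultimately show "\<Gamma> * Lambda_rate g \<rho> - ln \<Gamma> - 1 - 9 / (\<Gamma> * \<rho>) \<le> Lambda g \<Gamma>"
    using Phi_quotient_bounds(1)[of \<rho> \<Gamma> g] \<Gamma> by linarith
qed

lemma eventually_Gamma_large:
  fixes g :: real
  assumes "0 < g"
  shows "\<forall>\<^sub>F \<Gamma> in at_top. 32 \<le> \<Gamma> \<and> \<Gamma> / 2 + g * \<Gamma> + 9 \<le> g * \<Gamma>^2"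
proof -
  have "\<forall>\<^sub>F \<Gamma> in at_top. \<Gamma> / 2 + g * \<Gamma> + 9 \<le> g * \<Gamma>^2"
    using assms by real_asymp
  with eventually_ge_at_top[of 32] show ?thesis
    by eventually_elim simp
qed

lemma eventually_Lambda_over_Gamma_gt:
  fixes g \<rho> a :: real
  assumes g: "0 < g" and \<rho>: "0 < \<rho>" "\<rho> \<le> 1" and a: "a < Lambda_rate g \<rho>"
  shows "\<forall>\<^sub>F \<Gamma> in at_top. a < Lambda g \<Gamma> / \<Gamma>"
proof -
  have "((\<lambda>\<Gamma>. (ln \<Gamma> + 1 + 9 / (\<Gamma> * \<rho>)) / \<Gamma>) \<longlongrightarrow> 0) at_top"
    using \<rho> by real_asymp
  then have "\<forall>\<^sub>F \<Gamma> in at_top. (ln \<Gamma> + 1 + 9 / (\<Gamma> * \<rho>)) / \<Gamma> < Lambda_rate g \<rho> - a"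
    using a by (intro order_tendstoD) auto
  with eventually_Gamma_large[OF g] show ?thesis
  proof eventually_elim
    case (elim \<Gamma>)
    then have "\<Gamma> * Lambda_rate g \<rho> - ln \<Gamma> - 1 - 9 / (\<Gamma> * \<rho>) \<le> Lambda g \<Gamma>"
      using Lambda_bounds(2)[OF g] \<rho> by blast
    moreover have "\<Gamma> * Lambda_rate g \<rho> - ln \<Gamma> - 1 - 9 / (\<Gamma> * \<rho>)
        = \<Gamma> * (Lambda_rate g \<rho> - (ln \<Gamma> + 1 + 9 / (\<Gamma> * \<rho>)) / \<Gamma>)"
      using elim by (simp add: field_simps)
    moreover have "\<Gamma> * a < \<Gamma> * (Lambda_rate g \<rho> - (ln \<Gamma> + 1 + 9 / (\<Gamma> * \<rho>)) / \<Gamma>)"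
      using elim by (intro mult_strict_left_mono) auto
    ultimately have "\<Gamma> * a < Lambda g \<Gamma>"
      by linarith
    then show ?case
      using elim by (simp add: less_divide_eq mult.commute)
  qed
qed

lemma eventually_Lambda_over_Gamma_lt:
  fixes g a :: real
  assumes g: "0 < g" and a: "(SUP \<rho>\<in>{0<..1}. Lambda_rate g \<rho>) < a"
  shows "\<forall>\<^sub>F \<Gamma> in at_top. Lambda g \<Gamma> / \<Gamma> < a"
proof -
  define M where "M = (SUP \<rho>\<in>{0<..1}. Lambda_rate g \<rho>)"
  have "((\<lambda>\<Gamma>::real. 11 / \<Gamma>) \<longlongrightarrow> 0) at_top"
    by real_asymp
  then have "\<forall>\<^sub>F \<Gamma> in at_top. 11 / \<Gamma> < a - M"
    using a unfolding M_def by (intro order_tendstoD) auto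
  with eventually_Gamma_large[OF g] show ?thesis
  proof eventually_elim
    case (elim \<Gamma>)
    then have "Lambda g \<Gamma> \<le> \<Gamma> * M + 11"
      unfolding M_def using Lambda_bounds(1)[OF g] by blast
    then have "Lambda g \<Gamma> / \<Gamma> \<le> M + 11 / \<Gamma>"
      using elim by (simp add: divide_le_eq algebra_simps)
    then show ?case
      using elim by linarith
  qed
qed

lemma Lambda_over_Gamma_tendsto:
  fixes g :: real
  assumes g: "0 < g"
  shows "((\<lambda>\<Gamma>. Lambda g \<Gamma> / \<Gamma>) \<longlongrightarrow> (SUP \<rho>\<in>{0<..1}. Lambda_rate g \<rho>)) at_top"
proof (rule order_tendstoI)
  fix a
  assume "a < (SUP \<rho>\<in>{0<..1}. Lambda_rate g \<rho>)"
  then obtain \<rho> where "0 < \<rho>" "\<rho> \<le> 1" "a < Lambda_rate g \<rho>"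
    using less_cSUP_iff[OF _ bdd_above_Lambda_rate] g by force
  then show "\<forall>\<^sub>F \<Gamma> in at_top. a < Lambda g \<Gamma> / \<Gamma>"
    by (rule eventually_Lambda_over_Gamma_gt[OF g])
qed (rule eventually_Lambda_over_Gamma_lt[OF g])

section \<open>The threshold for linear growth\<close>

text \<open>
  An upper bound for \<open>sup\<^sub>\<rho> \<alpha>\<rho>/((1 + \<rho>)(\<rho> + \<alpha>))\<close> over \<open>(0, 1]\<close>. Since
  \<open>\<alpha> Lambda_rate g \<rho> - g = (\<alpha>\<rho>/((1 + \<rho>)(\<rho> + \<alpha>)) - g) (\<rho> + \<alpha>)/\<rho>\<close>, any \<open>g\<close> above it
  makes the slope \<open>g - \<alpha> sup\<^sub>\<rho> Lambda_rate g \<rho>\<close> of the replication bound positive.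
\<close>

definition rate_threshold :: "real \<Rightarrow> real" where
  "rate_threshold \<alpha> = (if \<alpha> \<le> 1 then \<alpha> / (1 + 3 * \<alpha>) else \<alpha> / (2 * (1 + \<alpha>)))"

lemma divide_le_divide_cross:
  fixes x y w z :: "'a :: linordered_field"
  assumes "0 < y" "0 < z" "x * z \<le> w * y"
  shows "x / y \<le> w / z"
  using assms by (simp add: divide_simps)

lemma ratio_le_rate_threshold:
  fixes \<alpha> \<rho> :: real
  assumes "0 < \<alpha>" "0 < \<rho>" "\<rho> \<le> 1"
  shows "\<alpha> * \<rho> / ((1 + \<rho>) * (\<rho> + \<alpha>)) \<le> rate_threshold \<alpha>"
proof (cases "\<alpha> \<le> 1")
  case True
  have "0 \<le> (\<rho> - \<alpha>)^2 + \<alpha> * (1 - \<alpha>)"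
    using True assms by simp
  then have "\<rho> * (1 + 3 * \<alpha>) \<le> (1 + \<rho>) * (\<rho> + \<alpha>)"
    by (simp add: power2_eq_square algebra_simps)
  then have "\<alpha> * \<rho> * (1 + 3 * \<alpha>) \<le> \<alpha> * ((1 + \<rho>) * (\<rho> + \<alpha>))"
    using assms by (simp add: mult_left_mono mult.assoc)
  then show ?thesis
    unfolding rate_threshold_def using True assms by (simp add: divide_le_divide_cross)
next
  case False
  have "0 \<le> (1 - \<rho>) * (\<alpha> - \<rho>)"
    using False assms by simp
  then have "\<rho> * (2 * (1 + \<alpha>)) \<le> (1 + \<rho>) * (\<rho> + \<alpha>)"
    by (simp add: algebra_simps)
  then have "\<alpha> * \<rho> * (2 * (1 + \<alpha>)) \<le> \<alpha> * ((1 + \<rho>) * (\<rho> + \<alpha>))"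
    using assms by (simp add: mult_left_mono mult.assoc)
  then show ?thesis
    unfolding rate_threshold_def using False assms by (simp add: divide_le_divide_cross)
qed

lemma alpha_Lambda_rate_le_rate_threshold:
  fixes \<alpha> g \<rho> :: real
  assumes \<alpha>: "0 < \<alpha>" and \<rho>: "0 < \<rho>" "\<rho> \<le> 1" and g: "rate_threshold \<alpha> < g"
  shows "\<alpha> * Lambda_rate g \<rho> \<le> rate_threshold \<alpha>"
proof -
  define T where "T = \<alpha> * \<rho> / ((1 + \<rho>) * (\<rho> + \<alpha>))"
  have T: "T \<le> rate_threshold \<alpha>"
    unfolding T_def by (rule ratio_le_rate_threshold[OF \<alpha> \<rho>])
  have "1 + \<rho> \<noteq> 0" "\<rho> + \<alpha> \<noteq> 0"
    using \<alpha> \<rho> by auto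
  then have "\<alpha> * Lambda_rate g \<rho> = (T - g) * ((\<rho> + \<alpha>) / \<rho>) + g"
    unfolding T_def Lambda_rate_def using \<rho> by (simp add: divide_simps) (simp add: algebra_simps)
  also have "\<dots> \<le> (T - g) * 1 + g"
    using T g \<alpha> \<rho> by (intro add_right_mono mult_left_mono_neg) auto
  finally show ?thesis
    using T by simp
qed

lemma psi_integrand_le_quadratic:
  fixes \<alpha> \<mu> q :: real
  assumes "0 < \<mu>" "0 \<le> q" "q \<le> 1" "0 < \<alpha>"
  shows "2 * \<alpha> * q + 4 * q * sqrt ((1 - q) * q * (1 + \<alpha>)) - q^2 * (3 * \<alpha> + 1)
     \<le> (\<mu> - 3 * \<alpha> - 1 - 4 * (1 + \<alpha>) / \<mu>) * q^2 + (2 * \<alpha> + 4 * (1 + \<alpha>) / \<mu>) * q"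
proof -
  define x where "x = sqrt ((1 - q) * q * (1 + \<alpha>))"
  have x2: "x^2 = (1 - q) * q * (1 + \<alpha>)"
    unfolding x_def using assms by simp
  have "4 * \<mu> * q * x \<le> \<mu>^2 * q^2 + 4 * x^2"
    using sum_squares_ge_zero[of "\<mu> * q - 2 * x" 0] by (simp add: power2_eq_square algebra_simps)
  then have "4 * q * x \<le> \<mu> * q^2 + 4 * x^2 / \<mu>"
    using assms(1) by (simp add: field_simps power2_eq_square)
  also have "4 * x^2 / \<mu> = 4 * (1 + \<alpha>) / \<mu> * q - 4 * (1 + \<alpha>) / \<mu> * q^2"
    unfolding x2 by (simp add: power2_eq_square algebra_simps diff_divide_distrib)
  finally show ?thesis
    unfolding x_def[symmetric] by (simp add: algebra_simps)
qed

lemma quadratic_le_vertex: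
  fixes a b q :: real
  assumes "a < 0"
  shows "a * q^2 + b * q \<le> b^2 / (-4 * a)"
proof -
  have "(a * q^2 + b * q) * (-4 * a) \<le> b^2"
    using sum_squares_ge_zero[of "2 * a * q + b" 0] by (simp add: power2_eq_square algebra_simps)
  then show ?thesis
    using assms by (subst pos_le_divide_eq) auto
qed

lemma psi_gt_of_vertex_bound:
  fixes \<alpha> \<mu> B :: real
  assumes "0 < \<alpha>" "0 < \<mu>" "0 < B"
    and "(2 * \<alpha> + 4 * (1 + \<alpha>) / \<mu>)^2 < -4 * (\<mu> - 3 * \<alpha> - 1 - 4 * (1 + \<alpha>) / \<mu>) * B"
  shows "1 + \<alpha> - B < psi \<alpha>"
proof -
  define a where "a = \<mu> - 3 * \<alpha> - 1 - 4 * (1 + \<alpha>) / \<mu>"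
  define b where "b = 2 * \<alpha> + 4 * (1 + \<alpha>) / \<mu>"
  have vertex: "b^2 < -4 * a * B"
    using assms(4) unfolding a_def b_def .
  then have "0 < -4 * a * B"
    using zero_le_power2[of b] by linarith
  then have "a < 0"
    using assms(3) by (simp add: zero_less_mult_iff mult_less_0_iff)
  then have "b^2 / (-4 * a) < B"
    using vertex by (subst pos_divide_less_eq) (auto simp: mult.commute)
  moreover have "(SUP q\<in>{1/2..1}. 2 * \<alpha> * q + 4 * q * sqrt ((1 - q) * q * (1 + \<alpha>)) - q^2 * (3 * \<alpha> + 1))
      \<le> b^2 / (-4 * a)"
  proof (rule cSUP_least)
    fix q :: real
    assume "q \<in> {1/2..1}"
    then have "2 * \<alpha> * q + 4 * q * sqrt ((1 - q) * q * (1 + \<alpha>)) - q^2 * (3 * \<alpha> + 1) \<le> a * q^2 + b * q"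
      unfolding a_def b_def using psi_integrand_le_quadratic[OF assms(2) _ _ assms(1)] by auto
    also have "\<dots> \<le> b^2 / (-4 * a)"
      by (rule quadratic_le_vertex[OF \<open>a < 0\<close>])
    finally show "2 * \<alpha> * q + 4 * q * sqrt ((1 - q) * q * (1 + \<alpha>)) - q^2 * (3 * \<alpha> + 1) \<le> b^2 / (-4 * a)" .
  qed simp
  ultimately show ?thesis
    unfolding psi_def by linarith
qed

text \<open>The AM-GM weight \<open>\<mu> = (15 + 9\<alpha>)/10\<close> is a choice that works on all of \<open>(0, 2]\<close>.\<close>

lemma psi_gt_of_polynomial_bound:
  fixes \<alpha> B :: real
  defines "m \<equiv> 15 + 9 * \<alpha>"
  assumes \<alpha>: "0 < \<alpha>" and B: "0 < B"
    and poly: "10 * (2 * \<alpha> * m + 40 * (1 + \<alpha>))^2 < 4 * (10 * (3 * \<alpha> + 1) * m - m^2 + 400 * (1 + \<alpha>)) * m * B"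
  shows "1 + \<alpha> - B < psi \<alpha>"
proof (rule psi_gt_of_vertex_bound[OF \<alpha> _ B])
  have m: "0 < m"
    unfolding m_def using \<alpha> by simp
  then show "0 < m / 10"
    by simp
  have "(2 * \<alpha> + 4 * (1 + \<alpha>) / (m / 10))^2 = (2 * \<alpha> * m + 40 * (1 + \<alpha>))^2 / m^2"
    using m by (simp add: field_simps)
  also have "\<dots> < 4 * (10 * (3 * \<alpha> + 1) * m - m^2 + 400 * (1 + \<alpha>)) * m * B / (10 * m^2)"
    using poly m by (simp add: divide_simps)
  also have "\<dots> = -4 * (m / 10 - 3 * \<alpha> - 1 - 4 * (1 + \<alpha>) / (m / 10)) * B"
    using m by (simp add: field_simps power2_eq_square)
  finally show "(2 * \<alpha> + 4 * (1 + \<alpha>) / (m / 10))^2 < -4 * (m / 10 - 3 * \<alpha> - 1 - 4 * (1 + \<alpha>) / (m / 10)) * B" .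
qed

lemma psi_polynomial_pos_le_one:
  fixes \<alpha> :: real
  assumes "0 < \<alpha>" "\<alpha> \<le> 1"
  shows "0 < 3500 + 6400 * \<alpha> - 1240 * \<alpha>^2 + 1584 * \<alpha>^3 + 12492 * \<alpha>^4 + 3888 * \<alpha>^5"
proof -
  have "\<alpha>^2 \<le> \<alpha>" "0 \<le> \<alpha>^3" "0 \<le> \<alpha>^4" "0 \<le> \<alpha>^5"
    using assms by (auto simp: power2_eq_square mult_left_le)
  then show ?thesis
    using assms by linarith
qed

lemma psi_polynomial_pos_le_two:
  fixes \<alpha> :: real
  assumes "0 < \<alpha>" "\<alpha> \<le> 2"
  shows "0 < 3500 + 5650 * \<alpha> - 1990 * \<alpha>^2 - 666 * \<alpha>^3 + 162 * \<alpha>^4"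
proof -
  have sq: "\<alpha>^2 \<le> 2 * \<alpha>"
    using assms mult_right_mono[of \<alpha> 2 \<alpha>] by (simp add: power2_eq_square)
  have "\<alpha>^2 \<le> 4"
    using assms power_mono[of \<alpha> 2 2] by simp
  then have "\<alpha>^3 \<le> 4 * \<alpha>"
    using assms mult_left_mono[of "\<alpha>^2" 4 \<alpha>] by (simp add: power3_eq_cube power2_eq_square)
  moreover have "0 \<le> \<alpha>^4"
    by simp
  ultimately show ?thesis
    using sq assms by linarith
qed

lemma rate_threshold_lt_psi:
  fixes \<alpha> :: real
  assumes \<alpha>: "0 < \<alpha>" "\<alpha> \<le> 2"
  shows "(1 + \<alpha>) * rate_threshold \<alpha> < psi \<alpha>"
proof -
  define m where "m = 15 + 9 * \<alpha>"
  define X where "X = 2 * \<alpha> * m + 40 * (1 + \<alpha>)"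
  define Y where "Y = 10 * (3 * \<alpha> + 1) * m - m^2 + 400 * (1 + \<alpha>)"
  have psi_gt: "1 + \<alpha> - B < psi \<alpha>" if "0 < B" "10 * X^2 < 4 * Y * m * B" for B
    using psi_gt_of_polynomial_bound[OF \<alpha>(1) that(1)] that(2) unfolding X_def Y_def m_def .
  show ?thesis
  proof (cases "\<alpha> \<le> 1")
    case True
    have "0 < 3500 + 6400 * \<alpha> - 1240 * \<alpha>^2 + 1584 * \<alpha>^3 + 12492 * \<alpha>^4 + 3888 * \<alpha>^5"
      by (rule psi_polynomial_pos_le_one[OF \<alpha>(1) True])
    also have "\<dots> = 4 * Y * m * ((1 + \<alpha>) * (1 + 2 * \<alpha>)) - 10 * X^2 * (1 + 3 * \<alpha>)"
      unfolding X_def Y_def m_def by (simp add: eval_nat_numeral algebra_simps)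
    finally have "1 + \<alpha> - (1 + \<alpha>) * (1 + 2 * \<alpha>) / (1 + 3 * \<alpha>) < psi \<alpha>"
      using \<alpha> by (intro psi_gt) (simp_all add: pos_less_divide_eq mult.assoc)
    moreover have "1 + \<alpha> - (1 + \<alpha>) * (1 + 2 * \<alpha>) / (1 + 3 * \<alpha>) = (1 + \<alpha>) * rate_threshold \<alpha>"
      unfolding rate_threshold_def using True \<alpha> by (simp add: field_simps)
    ultimately show ?thesis
      by simp
  next
    case False
    have "0 < 3500 + 5650 * \<alpha> - 1990 * \<alpha>^2 - 666 * \<alpha>^3 + 162 * \<alpha>^4"
      using psi_polynomial_pos_le_two \<alpha> by simp
    also have "\<dots> = 2 * Y * m * (2 + \<alpha>) - 10 * X^2"
      unfolding X_def Y_def m_def by (simp add: eval_nat_numeral algebra_simps)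
    also have "2 * Y * m * (2 + \<alpha>) = 4 * Y * m * ((2 + \<alpha>) / 2)"
      by simp
    finally have "1 + \<alpha> - (2 + \<alpha>) / 2 < psi \<alpha>"
      using \<alpha> by (intro psi_gt) simp_all
    moreover have "1 + \<alpha> - (2 + \<alpha>) / 2 = (1 + \<alpha>) * rate_threshold \<alpha>"
      unfolding rate_threshold_def using False \<alpha> by (simp add: field_simps)
    ultimately show ?thesis
      by simp
  qed
qed

lemma rate_threshold_lt_middle_branch:
  fixes \<alpha> :: real
  assumes \<alpha>: "0 < \<alpha>" "\<alpha> < 2"
  shows "rate_threshold \<alpha> < \<alpha> / (2 * (1 + \<alpha>)) * (1 + (\<alpha> + 5 - 4 * sqrt (\<alpha> + 1)) / (3 * \<alpha> + 1))"
proof (cases "\<alpha> \<le> 1")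
  case True
  define c where "c = \<alpha> / (2 * (1 + \<alpha>))"
  have c: "0 < c" "c * (2 * (1 + \<alpha>)) = \<alpha>"
    unfolding c_def using \<alpha> by simp_all
  have "\<alpha> + 1 < (1 + \<alpha> / 2)^2"
    using \<alpha> by (simp add: power2_eq_square algebra_simps)
  then have "sqrt (\<alpha> + 1) < sqrt ((1 + \<alpha> / 2)^2)"
    by (rule real_sqrt_less_mono)
  then have "2 * (1 + \<alpha>) < 4 * \<alpha> + 6 - 4 * sqrt (\<alpha> + 1)"
    using \<alpha> by simp
  then have "c * (2 * (1 + \<alpha>)) / (3 * \<alpha> + 1) < c * (4 * \<alpha> + 6 - 4 * sqrt (\<alpha> + 1)) / (3 * \<alpha> + 1)"
    using c \<alpha> by (intro divide_strict_right_mono mult_strict_left_mono) auto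
  also have "(4 * \<alpha> + 6 - 4 * sqrt (\<alpha> + 1)) / (3 * \<alpha> + 1) = 1 + (\<alpha> + 5 - 4 * sqrt (\<alpha> + 1)) / (3 * \<alpha> + 1)"
    using \<alpha> by (simp add: field_simps)
  then have "c * (4 * \<alpha> + 6 - 4 * sqrt (\<alpha> + 1)) / (3 * \<alpha> + 1) = c * (1 + (\<alpha> + 5 - 4 * sqrt (\<alpha> + 1)) / (3 * \<alpha> + 1))"
    by (simp only: times_divide_eq_right[symmetric])
  finally show ?thesis
    unfolding rate_threshold_def c_def[symmetric] using True c by (simp add: add.commute)
next
  case False
  have "\<alpha> + 1 < ((\<alpha> + 5) / 4)^2"
  proof -
    have "0 < (\<alpha> - 3)^2"
      using \<alpha> by simp
    then show ?thesis
      by (simp add: power2_eq_square field_simps)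
  qed
  then have "sqrt (\<alpha> + 1) < sqrt (((\<alpha> + 5) / 4)^2)"
    by (rule real_sqrt_less_mono)
  then have "sqrt (\<alpha> + 1) < (\<alpha> + 5) / 4"
    using \<alpha> by simp
  then have "0 < (\<alpha> + 5 - 4 * sqrt (\<alpha> + 1)) / (3 * \<alpha> + 1)"
    using \<alpha> by simp
  then have "\<alpha> / (2 * (1 + \<alpha>)) * 1 < \<alpha> / (2 * (1 + \<alpha>)) * (1 + (\<alpha> + 5 - 4 * sqrt (\<alpha> + 1)) / (3 * \<alpha> + 1))"
    using \<alpha> by (intro mult_strict_left_mono) auto
  then show ?thesis
    unfolding rate_threshold_def using False by simp
qed

text \<open>Both branches beat the threshold on \<open>(0, 2)\<close>, so nothing about \<open>alpha0\<close> is needed.\<close>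

lemma rate_threshold_lt_gamma_bar:
  fixes \<alpha> :: real
  assumes \<alpha>: "0 < \<alpha>" "\<alpha> < 2"
  shows "rate_threshold \<alpha> < gamma_bar \<alpha>"
proof (cases "\<alpha> \<le> alpha0")
  case True
  have "rate_threshold \<alpha> < \<alpha> / (1 + \<alpha>)"
    unfolding rate_threshold_def using \<alpha> by (simp add: divide_strict_left_mono)
  moreover have "rate_threshold \<alpha> < psi \<alpha> / (1 + \<alpha>)"
    using rate_threshold_lt_psi[of \<alpha>] \<alpha> by (simp add: pos_less_divide_eq mult.commute)
  ultimately show ?thesis
    unfolding gamma_bar_def using True by (simp add: min_def)
next
  case False
  then show ?thesis
    unfolding gamma_bar_def using rate_threshold_lt_middle_branch[OF \<alpha>] \<alpha> by simp
qed

lemma alpha_SUP_Lambda_rate_lt: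
  fixes \<alpha> g :: real
  assumes \<alpha>: "0 < \<alpha>" and g: "rate_threshold \<alpha> < g"
  shows "\<alpha> * (SUP \<rho>\<in>{0<..1}. Lambda_rate g \<rho>) < g"
proof -
  have "(SUP \<rho>\<in>{0<..1}. Lambda_rate g \<rho>) \<le> rate_threshold \<alpha> / \<alpha>"
  proof (rule cSUP_least)
    fix \<rho> :: real
    assume "\<rho> \<in> {0<..1}"
    then have "\<alpha> * Lambda_rate g \<rho> \<le> rate_threshold \<alpha>"
      using alpha_Lambda_rate_le_rate_threshold[OF \<alpha> _ _ g] by auto
    then show "Lambda_rate g \<rho> \<le> rate_threshold \<alpha> / \<alpha>"
      using \<alpha> by (simp add: pos_le_divide_eq mult.commute)
  qed simp
  then show ?thesis
    using g \<alpha> by (simp add: pos_le_divide_eq mult.commute)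
qed

lemma replication_bound_linear_growth:
  fixes \<alpha> :: real
  assumes \<alpha>: "0 < \<alpha>" "\<alpha> < 2"
  shows "\<exists>c>0. ((\<lambda>\<Gamma>. replication_bound \<alpha> (gamma_bar \<alpha>) \<Gamma> / \<Gamma>) \<longlongrightarrow> c) at_top"
proof -
  define g where "g = gamma_bar \<alpha>"
  define M where "M = (SUP \<rho>\<in>{0<..1}. Lambda_rate g \<rho>)"
  have g: "rate_threshold \<alpha> < g"
    unfolding g_def by (rule rate_threshold_lt_gamma_bar[OF \<alpha>])
  moreover have "0 < rate_threshold \<alpha>"
    unfolding rate_threshold_def using \<alpha> by simp
  ultimately have g0: "0 < g"
    by simp
  have c: "0 < g - max (\<alpha> * M) 0"
    unfolding M_def using alpha_SUP_Lambda_rate_lt[OF \<alpha>(1) g] g0 by simp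
  have "((\<lambda>\<Gamma>. g - max (\<alpha> * (Lambda g \<Gamma> / \<Gamma>)) 0) \<longlongrightarrow> g - max (\<alpha> * M) 0) at_top"
    unfolding M_def by (intro tendsto_intros Lambda_over_Gamma_tendsto g0)
  moreover have "\<forall>\<^sub>F \<Gamma> in at_top. g - max (\<alpha> * (Lambda g \<Gamma> / \<Gamma>)) 0 = replication_bound \<alpha> g \<Gamma> / \<Gamma>"
    using eventually_gt_at_top[of 0]
  proof eventually_elim
    case (elim \<Gamma>)
    then have "max (\<alpha> * Lambda g \<Gamma>) 0 / \<Gamma> = max (\<alpha> * (Lambda g \<Gamma> / \<Gamma>)) 0"
      by (auto simp: max_def divide_le_0_iff)
    then show ?case
      unfolding replication_bound_def pos_part_def using elim by (simp add: diff_divide_distrib)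
  qed
  ultimately have "((\<lambda>\<Gamma>. replication_bound \<alpha> g \<Gamma> / \<Gamma>) \<longlongrightarrow> g - max (\<alpha> * M) 0) at_top"
    by (rule Lim_transform_eventually)
  with c show ?thesis
    unfolding g_def by blast
qed

theorem mainTheorem5:
  fixes \<alpha> \<gamma> :: real
  assumes alpha_pos: "0 < \<alpha>"
    and gamma_pos: "0 < \<gamma>"
    and gamma_ge2: "2 \<le> \<alpha> \<longrightarrow> \<gamma> = \<alpha> / (2 * (1 + \<alpha>))"
  shows "((\<lambda>\<Gamma>. converse_bound \<alpha> \<gamma> \<Gamma> - \<alpha> * ln \<Gamma>
              - (\<alpha> - (1 + \<alpha>) * ln (1 + \<alpha>))) \<longlongrightarrow> 0) at_top
       \<and> ((\<lambda>\<Gamma>. cap_bound \<alpha> \<gamma> \<Gamma> - \<alpha> * ln \<Gamma>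
              - (\<alpha> * ln (\<gamma> / \<alpha>) + \<alpha>)) \<longlongrightarrow> 0) at_top
       \<and> (2 \<le> \<alpha> \<longrightarrow> ((\<lambda>\<Gamma>. replication_bound \<alpha> \<gamma> \<Gamma> - \<alpha> * ln \<Gamma>
              - \<alpha> * ln (exp 1 / 8)) \<longlongrightarrow> 0) at_top)
       \<and> (\<alpha> < 2 \<longrightarrow> (\<exists>c>0. ((\<lambda>\<Gamma>. replication_bound \<alpha> (gamma_bar \<alpha>) \<Gamma> / \<Gamma>)
              \<longlongrightarrow> c) at_top))"
  using converse_bound_asymptotics[OF alpha_pos gamma_pos] cap_bound_asymptotics[OF alpha_pos gamma_pos]
    replication_bound_asymptotics[of \<alpha>] gamma_ge2 replication_bound_linear_growth[OF alpha_pos]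
  by blast

end
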